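(* Let $\kappa$ be of class $\mathcal{G}_2(2,0)$, $f\in C^2[0,1]$, and let $\varphi$ be the unique solution of $x-\mathcal{K}(x)=f$. If $v\in C^1[0,1]$, then $$\|(I-Q_n)\mathcal{K}_m'(\varphi)(I-Q_n)v\|_\infty=O(h^3)\quad\text{and}\quad\|\mathcal{K}_m'(\varphi)(I-Q_n)\mathcal{K}_m'(\varphi)(I-Q_n)v\|_\infty=O(h^4).$$
   Context: Setting. A kernel $\kappa:[0,1]\times[0,1]\times\mathbb{R}\to\mathbb{R}$ is of class $\mathcal{G}_2(2,0)$ if: (1) $\ell=\partial\kappa/\partial u$ is continuous on $\Psi=[0,1]^2\times\mathbb{R}$; (2) with $\Psi_1=\{0\le t\le s\le1,u\in\mathbb{R}\}$, $\Psi_2=\{0\le s\le t\le1,u\in\mathbb{R}\}$, there are $\ell_i\in C^{2}(\Psi_i)$ with $\ell=\ell_i$ on $\Psi_i$; (3) there are $\kappa_i\in C^{2}(\Psi_i)$ with $\kappa=\kappa_i$ on $\Psi_i$; (4) $\partial^2\kappa/\partial u^2$ is continuous on $\Psi$. $\mathcal{K}(x)(s)=\int_0^1\kappa(s,t,x(t))dt$ on $L^\infty[0,1]$; the solution $\varphi$ lies in $C^2[0,1]$. Quadrature: Gauss two-point rule with $w_1=w_2=1/2$, $\mu_{1,2}=\tfrac12\mp\tfrac1{2\sqrt3}$. For $n,p\in\mathbb{N}$, $m=np$, $h=1/n$, $\tilde h=1/m$, $s_i=i/m$, $\zeta_q^i=s_{i-1}+\mu_q\tilde h$. $\mathcal{K}_m'(\varphi)v(s)=\tilde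 h\sum_{i=1}^m\sum_{q=1}^2w_q\,\ell(s,\zeta_q^i,\varphi(\zeta_q^i))\,v(\zeta_q^i)$. Projection: $t_j=j/n$. For $v\in C[0,1]$, $(Q_nv)(t)=\frac1p\sum_{\nu=1}^p\sum_{q=1}^2w_qv(\zeta_q^{(j-1)p+\nu})$ for $t\in(t_{j-1},t_j]$, $j=1,\dots,n$, and $(Q_nv)(0)=(Q_nv)(t_1)$ (discrete orthogonal projection onto piecewise constants). Notation: $A=O(B)$ means $|A|\le CB$ with $C$ independent of $n,p$, for all sufficiently large $n$. *)

theory Defs
  imports "HOL-Analysis.Analysis"
begin

definition C2_on :: "('a::euclidean_space \<Rightarrow> real) \<Rightarrow> 'a set \<Rightarrow> bool" where
  "C2_on g S \<longleftrightarrow>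
     (\<exists>(g' :: 'a \<Rightarrow> 'a \<Rightarrow>\<^sub>L real) (g'' :: 'a \<Rightarrow> 'a \<Rightarrow>\<^sub>L ('a \<Rightarrow>\<^sub>L real)).
        (\<forall>x\<in>S. (g has_derivative blinfun_apply (g' x)) (at x) \<and>
                 (g' has_derivative blinfun_apply (g'' x)) (at x)) \<and>
        continuous_on S g'')"

definition C2_01 :: "(real \<Rightarrow> real) \<Rightarrow> bool" where
  "C2_01 g \<longleftrightarrow> (\<exists>g' g''. (\<forall>x\<in>{0..1}. (g has_real_derivative g' x) (at x within {0..1}) \<and>
        (g' has_real_derivative g'' x) (at x within {0..1})) \<and> continuous_on {0..1} g'')"

definition C1_01 :: "(real \<Rightarrow> real) \<Rightarrow> bool" where
  "C1_01 g \<longleftrightarrow> (\<exists>g'. (\<forall>x\<in>{0..1}. (g has_real_derivative g' x) (at x within {0..1}))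
        \<and> continuous_on {0..1} g')"

definition class_G2_2_0 ::
  "(real \<Rightarrow> real \<Rightarrow> real \<Rightarrow> real) \<Rightarrow> (real \<Rightarrow> real \<Rightarrow> real \<Rightarrow> real) \<Rightarrow> bool" where
  "class_G2_2_0 \<kappa> l \<longleftrightarrow>
     (\<forall>s\<in>{0..1}. \<forall>t\<in>{0..1}. \<forall>u. (\<kappa> s t has_real_derivative l s t u) (at u)) \<and>
     continuous_on ({0..1} \<times> {0..1} \<times> UNIV) (\<lambda>(s,t,u). l s t u) \<and>
     (\<exists>l1. C2_on l1 UNIV \<and> (\<forall>s t u. 0 \<le> t \<and> t \<le> s \<and> s \<le> 1 \<longrightarrow> l s t u = l1 (s,t,u))) \<and>
     (\<exists>l2. C2_on l2 UNIV \<and> (\<forall>s t u. 0 \<le> s \<and> s \<le> t \<and> t \<le> 1 \<longrightarrow> l s t u = l2 (s,t,u))) \<and>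
     (\<exists>k1. C2_on k1 UNIV \<and> (\<forall>s t u. 0 \<le> t \<and> t \<le> s \<and> s \<le> 1 \<longrightarrow> \<kappa> s t u = k1 (s,t,u))) \<and>
     (\<exists>k2. C2_on k2 UNIV \<and> (\<forall>s t u. 0 \<le> s \<and> s \<le> t \<and> t \<le> 1 \<longrightarrow> \<kappa> s t u = k2 (s,t,u))) \<and>
     (\<exists>lu. (\<forall>s\<in>{0..1}. \<forall>t\<in>{0..1}. \<forall>u. (l s t has_real_derivative lu s t u) (at u)) \<and>
           continuous_on ({0..1} \<times> {0..1} \<times> UNIV) (\<lambda>(s,t,u). lu s t u))"

text \<open>Gauss two-point rule.\<close>
definition gw :: "nat \<Rightarrow> real" where "gw q = 1/2"

definition gmu :: "nat \<Rightarrow> real" where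
  "gmu q = (if q = 1 then 1/2 - 1/(2 * sqrt 3) else 1/2 + 1/(2 * sqrt 3))"

definition zeta :: "nat \<Rightarrow> nat \<Rightarrow> nat \<Rightarrow> real" where
  "zeta m i q = (real (i - 1) + gmu q) / real m"

definition Kmd :: "(real \<Rightarrow> real \<Rightarrow> real \<Rightarrow> real) \<Rightarrow> (real \<Rightarrow> real) \<Rightarrow> nat
    \<Rightarrow> (real \<Rightarrow> real) \<Rightarrow> real \<Rightarrow> real" where
  "Kmd l \<phi> m v s = (1 / real m) *
     (\<Sum>i=1..m. \<Sum>q=1..2. gw q * l s (zeta m i q) (\<phi> (zeta m i q)) * v (zeta m i q))"

text \<open>Discrete orthogonal projection \<open>Q_n\<close> (m = n p). For t in (t_{j-1}, t_j] we have
  j = ceiling (n t); for t = 0 we take j = 1.\<close>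
definition Qn :: "nat \<Rightarrow> nat \<Rightarrow> (real \<Rightarrow> real) \<Rightarrow> real \<Rightarrow> real" where
  "Qn n p v t = (let j = max 1 (nat \<lceil>t * real n\<rceil>) in
     (1 / real p) * (\<Sum>\<nu>=1..p. \<Sum>q=1..2. gw q * v (zeta (n * p) ((j - 1) * p + \<nu>) q)))"

definition IQn :: "nat \<Rightarrow> nat \<Rightarrow> (real \<Rightarrow> real) \<Rightarrow> real \<Rightarrow> real" where
  "IQn n p v t = v t - Qn n p v t"

end

(* Write w = (I - Q_n) v.  The projection Q_n averages with the same Gauss weights that
   K_m'(phi) uses, so w has vanishing quadrature sum on every coarse cell, and |w| = O(h)
   because v is Lipschitz.  Hence in K_m'(phi) w the kernel t -> l(s, t, phi t) may be
   replaced, on each cell, by its deviation from its value at one node.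
   Comparing K_m'(phi) w at two points x, y with |x - y| <= h, the deviation of
   l(x, t, phi t) - l(y, t, phi t) is O(h^2) on cells that the diagonal does not cut, by a
   mixed second difference bound for the smooth pieces of l; only the at most two cells that
   meet the segment between x and y contribute O(h).  So K_m'(phi) w oscillates by O(h^3)
   at scale h, and I - Q_n turns such an oscillation bound into a sup bound.  Applying the
   cancellation once more, with a Lipschitz kernel, gains a further factor h. *)

theory Submission
  imports Defs
begin

section \<open>Lipschitz bounds from smoothness\<close>

lemma lipschitz_on_if_continuous_blinfun_derivative:
  fixes f :: "'a::real_normed_vector \<Rightarrow> 'b::real_normed_vector"
  assumes "compact K" "convex K"
    and deriv: "\<And>x. x \<in> K \<Longrightarrow> (f has_derivative blinfun_apply (f' x)) (at x within K)"
    and "continuous_on K f'"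
  obtains L where "L-lipschitz_on K f"
proof -
  have "bounded (f' ` K)"
    using assms by (intro compact_imp_bounded compact_continuous_image)
  then obtain B where B: "\<And>x. x \<in> K \<Longrightarrow> norm (f' x) \<le> B" "B > 0"
    by (auto simp: bounded_pos)
  have "norm (f x - f y) \<le> B * norm (x - y)" if "x \<in> K" "y \<in> K" for x y
    using differentiable_bound[OF \<open>convex K\<close> deriv _ that] B
    by (simp add: norm_blinfun.rep_eq[symmetric])
  then have "B-lipschitz_on K f"
    using B by (intro lipschitz_onI) (auto simp: dist_norm)
  then show thesis ..
qed

lemma C2_01_imp_C1_01: "C2_01 g \<Longrightarrow> C1_01 g"
  unfolding C2_01_def C1_01_def
  by (metis DERIV_continuous continuous_on_eq_continuous_within)

lemma C1_01_lipschitz_on: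
  assumes "C1_01 g"
  obtains L where "L-lipschitz_on {0..1} g"
proof -
  obtain g' where deriv: "\<And>x. x \<in> {0..1} \<Longrightarrow> (g has_real_derivative g' x) (at x within {0..1})"
    and cont: "continuous_on {0..1} g'"
    using assms unfolding C1_01_def by blast
  show thesis
  proof (rule lipschitz_on_if_continuous_blinfun_derivative)
    show "(g has_derivative blinfun_apply (blinfun_mult_right (g' x))) (at x within {0..1})"
      if "x \<in> {0..1}" for x
      using deriv[OF that] by (simp add: has_field_derivative_def)
    show "continuous_on {0..1} (\<lambda>x. blinfun_mult_right (g' x))"
      using cont by (intro bounded_linear.continuous_on[OF bounded_linear_blinfun_mult_right])
  qed (auto intro: that)
qed

lemma C2_on_lipschitz_on:
  fixes k :: "'a::euclidean_space \<Rightarrow> real"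
  assumes "C2_on k UNIV" "compact K" "convex K"
  obtains k' D1 D2 where "\<And>z. (k has_derivative blinfun_apply (k' z)) (at z)"
    "D1-lipschitz_on K k" "D2-lipschitz_on K k'"
proof -
  obtain k' k'' where d1: "\<And>z. (k has_derivative blinfun_apply (k' z)) (at z)"
    and d2: "\<And>z. (k' has_derivative blinfun_apply (k'' z)) (at z)"
    and cont: "continuous_on UNIV k''"
    using assms(1) unfolding C2_on_def by blast
  have "continuous_on K k'"
    by (intro continuous_at_imp_continuous_on ballI has_derivative_continuous[OF d2])
  then obtain D1 where "D1-lipschitz_on K k"
    using lipschitz_on_if_continuous_blinfun_derivative[OF assms(2,3) has_derivative_at_withinI[OF d1]]
    by blast
  moreover obtain D2 where "D2-lipschitz_on K k'"
    using lipschitz_on_if_continuous_blinfun_derivative[OF assms(2,3) has_derivative_at_withinI[OF d2]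
        continuous_on_subset[OF cont]] by blast
  ultimately show thesis using d1 that by blast
qed

lemma second_difference_le:
  fixes k :: "'a::real_normed_vector \<Rightarrow> real"
  assumes deriv: "\<And>z. z \<in> K \<Longrightarrow> (k has_derivative blinfun_apply (k' z)) (at z)"
    and lip: "D-lipschitz_on K k'" and "convex K"
    and K: "x + y \<in> K" "x' + y \<in> K" "x + y' \<in> K" "x' + y' \<in> K"
  shows "\<bar>k (x + y) - k (x' + y) - (k (x + y') - k (x' + y'))\<bar> \<le> D * norm (x - x') * norm (y - y')"
proof -
  have shifted_in_K: "\<sigma> + c \<in> K" if "\<sigma> \<in> closed_segment x' x" "x + c \<in> K" "x' + c \<in> K" for \<sigma> c
  proof -
    have "c + \<sigma> \<in> closed_segment (c + x') (c + x)"
      using that(1) by (simp add: closed_segment_translation)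
    also have "\<dots> \<subseteq> K"
      using that(2,3) \<open>convex K\<close> by (simp add: closed_segment_subset add.commute)
    finally show ?thesis by (simp add: add.commute)
  qed
  define G where "G \<sigma> = k (\<sigma> + y) - k (\<sigma> + y')" for \<sigma>
  have "norm (G x - G x') \<le> (D * norm (y - y')) * norm (x - x')"
  proof (rule differentiable_bound[OF convex_closed_segment])
    fix \<sigma> assume \<sigma>: "\<sigma> \<in> closed_segment x' x"
    have "((\<lambda>\<sigma>. k (\<sigma> + c)) has_derivative blinfun_apply (k' (\<sigma> + c))) (at \<sigma> within closed_segment x' x)"
      if "\<sigma> + c \<in> K" for c
      using has_derivative_compose[OF has_derivative_add_const[OF has_derivative_ident] deriv[OF that]]
      by simp
    then show "(G has_derivative blinfun_apply (k' (\<sigma> + y) - k' (\<sigma> + y'))) (at \<sigma> within closed_segment x' x)"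
      unfolding G_def blinfun.diff_left
      using shifted_in_K[OF \<sigma>] K by (intro has_derivative_diff) auto
    show "onorm (blinfun_apply (k' (\<sigma> + y) - k' (\<sigma> + y'))) \<le> D * norm (y - y')"
      using lipschitz_on_normD[OF lip shifted_in_K[OF \<sigma>] shifted_in_K[OF \<sigma>]] K
      by (simp add: norm_blinfun.rep_eq[symmetric])
  qed auto
  then show ?thesis
    unfolding G_def by (simp add: mult_ac)
qed

lemma norm_graph_diff_le:
  fixes \<phi> :: "real \<Rightarrow> real"
  assumes "Lp-lipschitz_on {0..1} \<phi>" "t \<in> {0..1}" "t' \<in> {0..1}"
  shows "norm ((t, \<phi> t) - (t', \<phi> t')) \<le> (1 + Lp) * \<bar>t - t'\<bar>"
  using norm_Pair_le[of "t - t'" "\<phi> t - \<phi> t'"] lipschitz_onD[OF assms]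
  by (simp add: dist_real_def algebra_simps)

lemma lipschitz_on_graph_in_box:
  fixes \<phi> :: "real \<Rightarrow> real"
  assumes "Lp-lipschitz_on {0..1} \<phi>"
  obtains B where
    "\<And>s t. s \<in> {0..1} \<Longrightarrow> t \<in> {0..1} \<Longrightarrow> (s, t, \<phi> t) \<in> {0..1::real} \<times> {0..1} \<times> {-B..B}"
proof (rule that[of "\<bar>\<phi> 0\<bar> + Lp"])
  fix s t :: real assume "s \<in> {0..1}" "t \<in> {0..1}"
  moreover have "\<bar>\<phi> t - \<phi> 0\<bar> \<le> Lp * t"
    using lipschitz_onD[OF assms \<open>t \<in> {0..1}\<close>, of 0] \<open>t \<in> {0..1}\<close> by (simp add: dist_real_def)
  moreover have "Lp * t \<le> Lp"
    using lipschitz_on_nonneg[OF assms] \<open>t \<in> {0..1}\<close> by (simp add: mult_left_le)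
  ultimately show "(s, t, \<phi> t) \<in> {0..1} \<times> {0..1} \<times> {- (\<bar>\<phi> 0\<bar> + Lp)..\<bar>\<phi> 0\<bar> + Lp}"
    by (auto simp: abs_le_iff)
qed

lemma C2_on_bounds_along_graph:
  fixes k :: "real \<times> real \<times> real \<Rightarrow> real"
  assumes "C2_on k UNIV" and \<phi>: "Lp-lipschitz_on {0..1} \<phi>"
  obtains D where
    "\<And>s. s \<in> {0..1} \<Longrightarrow> D-lipschitz_on {0..1} (\<lambda>t. k (s, t, \<phi> t))"
    "\<And>s s' t t'. s \<in> {0..1} \<Longrightarrow> s' \<in> {0..1} \<Longrightarrow> t \<in> {0..1} \<Longrightarrow> t' \<in> {0..1} \<Longrightarrow>
       \<bar>k (s, t, \<phi> t) - k (s', t, \<phi> t) - (k (s, t', \<phi> t') - k (s', t', \<phi> t'))\<bar>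
         \<le> D * \<bar>s - s'\<bar> * \<bar>t - t'\<bar>"
proof -
  obtain B where graph_in_K:
    "\<And>s t. s \<in> {0..1} \<Longrightarrow> t \<in> {0..1} \<Longrightarrow> (s, t, \<phi> t) \<in> {0..1::real} \<times> {0..1} \<times> {-B..B}"
    by (rule lipschitz_on_graph_in_box[OF \<phi>]) (rule that)
  have K: "compact ({0..1} \<times> {0..1} \<times> {-B..B} :: (real \<times> real \<times> real) set)"
    "convex ({0..1} \<times> {0..1} \<times> {-B..B} :: (real \<times> real \<times> real) set)"
    by (auto intro!: compact_Times convex_Times)
  then obtain k' D1 D2 where deriv: "\<And>z. (k has_derivative blinfun_apply (k' z)) (at z)"
    and D1: "D1-lipschitz_on ({0..1} \<times> {0..1} \<times> {-B..B}) k"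
    and D2: "D2-lipschitz_on ({0..1} \<times> {0..1} \<times> {-B..B}) k'"
    using C2_on_lipschitz_on[OF assms(1)] by metis
  have "0 \<le> D2" "0 \<le> Lp"
    using D2 \<phi> by (auto dest: lipschitz_on_nonneg)
  define D where "D = max D1 D2 * (1 + Lp)"
  show thesis
  proof
    fix s :: real assume s: "s \<in> {0..1}"
    have "(1 + Lp)-lipschitz_on {0..1} (\<lambda>t. (s, t, \<phi> t))"
      using norm_graph_diff_le[OF \<phi>] \<open>0 \<le> Lp\<close>
      by (intro lipschitz_onI) (simp_all add: dist_norm norm_Pair)
    then have "(D1 * (1 + Lp))-lipschitz_on {0..1} (\<lambda>t. k (s, t, \<phi> t))"
      by (rule lipschitz_on_compose2) (rule lipschitz_on_subset[OF D1], use graph_in_K s in auto)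
    then show "D-lipschitz_on {0..1} (\<lambda>t. k (s, t, \<phi> t))"
      unfolding D_def by (rule lipschitz_on_le) (use \<open>0 \<le> Lp\<close> in \<open>simp add: mult_right_mono\<close>)
  next
    fix s s' t t' :: real assume st: "s \<in> {0..1}" "s' \<in> {0..1}" "t \<in> {0..1}" "t' \<in> {0..1}"
    have "\<bar>k ((s, 0, 0) + (0, t, \<phi> t)) - k ((s', 0, 0) + (0, t, \<phi> t))
        - (k ((s, 0, 0) + (0, t', \<phi> t')) - k ((s', 0, 0) + (0, t', \<phi> t')))\<bar>
        \<le> D2 * norm ((s, 0::real, 0::real) - (s', 0, 0)) * norm ((0::real, t, \<phi> t) - (0, t', \<phi> t'))"
      by (rule second_difference_le[OF deriv D2 K(2)])
        (use graph_in_K[of s t] graph_in_K[of s' t] graph_in_K[of s t'] graph_in_K[of s' t'] st in simp_all)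
    also have "\<dots> = D2 * \<bar>s - s'\<bar> * norm ((t, \<phi> t) - (t', \<phi> t'))"
      by (simp add: norm_Pair)
    also have "\<dots> \<le> D2 * \<bar>s - s'\<bar> * ((1 + Lp) * \<bar>t - t'\<bar>)"
      using norm_graph_diff_le[OF \<phi> st(3,4)] \<open>0 \<le> D2\<close> by (intro mult_left_mono) auto
    also have "\<dots> \<le> D * \<bar>s - s'\<bar> * \<bar>t - t'\<bar>"
      unfolding D_def using \<open>0 \<le> Lp\<close> by (simp add: mult_right_mono mult_ac)
    finally show "\<bar>k (s, t, \<phi> t) - k (s', t, \<phi> t) - (k (s, t', \<phi> t') - k (s', t', \<phi> t'))\<bar>
         \<le> D * \<bar>s - s'\<bar> * \<bar>t - t'\<bar>" by simp
  qed
qed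

section \<open>The kernel derivative along the graph of the solution\<close>

lemma class_G2_2_0_derivative_pieces:
  assumes "class_G2_2_0 \<kappa> l"
  obtains l1 l2 where "C2_on l1 UNIV" "C2_on l2 UNIV"
    "\<And>s t u. 0 \<le> t \<Longrightarrow> t \<le> s \<Longrightarrow> s \<le> 1 \<Longrightarrow> l s t u = l1 (s, t, u)"
    "\<And>s t u. 0 \<le> s \<Longrightarrow> s \<le> t \<Longrightarrow> t \<le> 1 \<Longrightarrow> l s t u = l2 (s, t, u)"
proof -
  from assms obtain l1 l2 where "C2_on l1 UNIV" "C2_on l2 UNIV"
    "\<forall>s t u. 0 \<le> t \<and> t \<le> s \<and> s \<le> 1 \<longrightarrow> l s t u = l1 (s, t, u)"
    "\<forall>s t u. 0 \<le> s \<and> s \<le> t \<and> t \<le> 1 \<longrightarrow> l s t u = l2 (s, t, u)"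
    unfolding class_G2_2_0_def by (elim conjE exE)
  then show thesis
    by (intro that) auto
qed

lemma class_G2_2_0_lipschitz_along_graph:
  fixes \<phi> :: "real \<Rightarrow> real"
  assumes "class_G2_2_0 \<kappa> l" "Lp-lipschitz_on {0..1} \<phi>"
  obtains L where "\<And>s. s \<in> {0..1} \<Longrightarrow> L-lipschitz_on {0..1} (\<lambda>t. l s t (\<phi> t))"
proof -
  obtain l1 l2 where l12: "C2_on l1 UNIV" "C2_on l2 UNIV"
    and l1: "\<And>s t u. 0 \<le> t \<Longrightarrow> t \<le> s \<Longrightarrow> s \<le> 1 \<Longrightarrow> l s t u = l1 (s, t, u)"
    and l2: "\<And>s t u. 0 \<le> s \<Longrightarrow> s \<le> t \<Longrightarrow> t \<le> 1 \<Longrightarrow> l s t u = l2 (s, t, u)"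
    by (rule class_G2_2_0_derivative_pieces[OF assms(1)]) (rule that)
  obtain D1 where D1: "\<And>s. s \<in> {0..1} \<Longrightarrow> D1-lipschitz_on {0..1} (\<lambda>t. l1 (s, t, \<phi> t))"
    by (rule C2_on_bounds_along_graph[OF l12(1) assms(2)]) (rule that)
  obtain D2 where D2: "\<And>s. s \<in> {0..1} \<Longrightarrow> D2-lipschitz_on {0..1} (\<lambda>t. l2 (s, t, \<phi> t))"
    by (rule C2_on_bounds_along_graph[OF l12(2) assms(2)]) (rule that)
  have "(max D1 D2)-lipschitz_on {0..1} (\<lambda>t. l s t (\<phi> t))" if s: "s \<in> {0..1}" for s
  proof -
    have "D1-lipschitz_on {0..s} (\<lambda>t. l s t (\<phi> t))"
      by (rule lipschitz_on_transform[OF lipschitz_on_subset[OF D1[OF s]]]) (use s l1 in auto)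
    moreover have "D2-lipschitz_on {s..1} (\<lambda>t. l s t (\<phi> t))"
      by (rule lipschitz_on_transform[OF lipschitz_on_subset[OF D2[OF s]]]) (use s l2 in auto)
    ultimately show ?thesis
      using lipschitz_on_concat_max[of D1 0 s "\<lambda>t. l s t (\<phi> t)" D2 1 "\<lambda>t. l s t (\<phi> t)"] by simp
  qed
  then show thesis
    using that by blast
qed

definition off_diagonal_mixed_difference_le :: "(real \<Rightarrow> real \<Rightarrow> real) \<Rightarrow> real \<Rightarrow> bool" where
  "off_diagonal_mixed_difference_le F C \<longleftrightarrow>
     (\<forall>s\<in>{0..1}. \<forall>s'\<in>{0..1}. \<forall>t\<in>{0..1}. \<forall>t'\<in>{0..1}.
        max t t' \<le> min s s' \<or> max s s' \<le> min t t' \<longrightarrow>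
        \<bar>F s t - F s' t - (F s t' - F s' t')\<bar> \<le> C * \<bar>s - s'\<bar> * \<bar>t - t'\<bar>)"

lemma class_G2_2_0_mixed_difference_along_graph:
  fixes \<phi> :: "real \<Rightarrow> real"
  assumes "class_G2_2_0 \<kappa> l" "Lp-lipschitz_on {0..1} \<phi>"
  obtains C where "off_diagonal_mixed_difference_le (\<lambda>s t. l s t (\<phi> t)) C" "0 \<le> C"
proof -
  obtain l1 l2 where l12: "C2_on l1 UNIV" "C2_on l2 UNIV"
    and l1: "\<And>s t u. 0 \<le> t \<Longrightarrow> t \<le> s \<Longrightarrow> s \<le> 1 \<Longrightarrow> l s t u = l1 (s, t, u)"
    and l2: "\<And>s t u. 0 \<le> s \<Longrightarrow> s \<le> t \<Longrightarrow> t \<le> 1 \<Longrightarrow> l s t u = l2 (s, t, u)"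
    by (rule class_G2_2_0_derivative_pieces[OF assms(1)]) (rule that)
  obtain D1 where D1: "\<And>s s' t t'. s \<in> {0..1} \<Longrightarrow> s' \<in> {0..1} \<Longrightarrow> t \<in> {0..1} \<Longrightarrow> t' \<in> {0..1} \<Longrightarrow>
       \<bar>l1 (s, t, \<phi> t) - l1 (s', t, \<phi> t) - (l1 (s, t', \<phi> t') - l1 (s', t', \<phi> t'))\<bar>
         \<le> D1 * \<bar>s - s'\<bar> * \<bar>t - t'\<bar>"
    by (rule C2_on_bounds_along_graph[OF l12(1) assms(2)]) (rule that)
  obtain D2 where D2: "\<And>s s' t t'. s \<in> {0..1} \<Longrightarrow> s' \<in> {0..1} \<Longrightarrow> t \<in> {0..1} \<Longrightarrow> t' \<in> {0..1} \<Longrightarrow>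
       \<bar>l2 (s, t, \<phi> t) - l2 (s', t, \<phi> t) - (l2 (s, t', \<phi> t') - l2 (s', t', \<phi> t'))\<bar>
         \<le> D2 * \<bar>s - s'\<bar> * \<bar>t - t'\<bar>"
    by (rule C2_on_bounds_along_graph[OF l12(2) assms(2)]) (rule that)
  define C where "C = max 0 (max D1 D2)"
  have "off_diagonal_mixed_difference_le (\<lambda>s t. l s t (\<phi> t)) C"
    unfolding off_diagonal_mixed_difference_le_def
  proof (intro ballI impI)
    fix s s' t t' :: real
    assume st: "s \<in> {0..1}" "s' \<in> {0..1}" "t \<in> {0..1}" "t' \<in> {0..1}"
      and side: "max t t' \<le> min s s' \<or> max s s' \<le> min t t'"
    have mono: "D1 * \<bar>s - s'\<bar> * \<bar>t - t'\<bar> \<le> C * \<bar>s - s'\<bar> * \<bar>t - t'\<bar>"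
      "D2 * \<bar>s - s'\<bar> * \<bar>t - t'\<bar> \<le> C * \<bar>s - s'\<bar> * \<bar>t - t'\<bar>"
      unfolding C_def by (intro mult_right_mono; simp)+
    from side show "\<bar>l s t (\<phi> t) - l s' t (\<phi> t) - (l s t' (\<phi> t') - l s' t' (\<phi> t'))\<bar>
        \<le> C * \<bar>s - s'\<bar> * \<bar>t - t'\<bar>"
    proof (elim disjE)
      assume "max t t' \<le> min s s'"
      then show ?thesis
        using D1[OF st] st l1[of t s] l1[of t s'] l1[of t' s] l1[of t' s'] mono(1) by auto
    next
      assume "max s s' \<le> min t t'"
      then show ?thesis
        using D2[OF st] st l2[of s t] l2[of s' t] l2[of s t'] l2[of s' t'] mono(2) by auto
    qed
  qed
  then show thesis
    using that C_def by simp
qed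

section \<open>Cells of the coarse mesh\<close>

text \<open>The Gauss node \<open>\<zeta>_q^i\<close> with \<open>i = (j - 1) p + \<nu>\<close>, in the \<open>\<nu>\<close>-th fine interval of the
  coarse cell \<open>(t_{j-1}, t_j]\<close>.\<close>
definition cell_node :: "nat \<Rightarrow> nat \<Rightarrow> nat \<Rightarrow> nat \<Rightarrow> nat \<Rightarrow> real" where
  "cell_node n p j \<nu> q = zeta (n * p) ((j - 1) * p + \<nu>) q"

definition cell_index :: "nat \<Rightarrow> real \<Rightarrow> nat" where
  "cell_index n t = max 1 (nat \<lceil>t * real n\<rceil>)"

definition cell_sum :: "nat \<Rightarrow> nat \<Rightarrow> (real \<Rightarrow> real) \<Rightarrow> nat \<Rightarrow> real" where
  "cell_sum n p g j = (\<Sum>\<nu>=1..p. \<Sum>q=1..2. gw q * g (cell_node n p j \<nu> q))"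

lemma gmu_bounds: "0 < gmu q \<and> gmu q < 1"
proof -
  have "0 < 1 / (2 * sqrt 3)" "1 / (2 * sqrt 3) < (1 / 2 :: real)"
    by (simp_all add: field_simps)
  then show ?thesis
    unfolding gmu_def by (simp only: split: if_split) linarith
qed

lemma cell_node_bounds:
  assumes "1 \<le> n" "1 \<le> p" "1 \<le> j" "\<nu> \<in> {1..p}"
  shows "real (j - 1) / real n < cell_node n p j \<nu> q \<and> cell_node n p j \<nu> q < real j / real n"
proof -
  have node: "cell_node n p j \<nu> q = (real (j - 1) * real p + (real \<nu> - 1 + gmu q)) / (real n * real p)"
  proof -
    have "(j - 1) * p + \<nu> - 1 = (j - 1) * p + (\<nu> - 1)"
      using assms(4) by simp
    then show ?thesis
      using assms(4) unfolding cell_node_def zeta_def by (simp add: of_nat_diff)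
  qed
  have "0 < real \<nu> - 1 + gmu q" "real \<nu> - 1 + gmu q < real p"
    using assms gmu_bounds[of q] by auto
  moreover have "0 < real n * real p"
    using assms by simp
  ultimately have "real (j - 1) * real p / (real n * real p) < cell_node n p j \<nu> q"
    "cell_node n p j \<nu> q < (real (j - 1) * real p + real p) / (real n * real p)"
    unfolding node by (intro divide_strict_right_mono; linarith)+
  moreover have "real (j - 1) * real p + real p = real j * real p"
    using assms(3) by (simp add: of_nat_diff algebra_simps)
  ultimately show ?thesis
    using assms by simp
qed

lemma cell_node_in_unit:
  assumes "1 \<le> n" "1 \<le> p" "j \<in> {1..n}" "\<nu> \<in> {1..p}"
  shows "cell_node n p j \<nu> q \<in> {0..1}"
proof -
  have "0 \<le> real (j - 1) / real n" "real j / real n \<le> 1"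
    using assms by auto
  with cell_node_bounds[OF assms(1,2) _ assms(4), of j q] assms(3) show ?thesis
    unfolding atLeastAtMost_iff by (intro conjI; linarith)
qed

lemma cell_node_dist:
  assumes "1 \<le> n" "1 \<le> p" "1 \<le> j" "\<nu> \<in> {1..p}" "\<nu>' \<in> {1..p}"
  shows "\<bar>cell_node n p j \<nu> q - cell_node n p j \<nu>' q'\<bar> \<le> 1 / real n"
  using cell_node_bounds[OF assms(1-4), of q] cell_node_bounds[OF assms(1-3,5), of q'] assms(3)
  by (simp add: of_nat_diff diff_divide_distrib abs_le_iff)

lemma cell_index_bounds:
  assumes "1 \<le> n" "t \<in> {0..1}"
  shows "cell_index n t \<in> {1..n}"
    "real (cell_index n t - 1) / real n \<le> t" "t \<le> real (cell_index n t) / real n"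
proof -
  have "t * real n \<le> real n"
    using assms by (simp add: mult_left_le_one_le)
  then have "cell_index n t \<le> n"
    unfolding cell_index_def using assms(1) by (simp add: nat_le_iff ceiling_le_iff)
  then show "cell_index n t \<in> {1..n}"
    by (simp add: cell_index_def)
  have "real (cell_index n t - 1) \<le> t * real n \<and> t * real n \<le> real (cell_index n t)"
  proof (cases "t = 0")
    case False
    then have "1 \<le> \<lceil>t * real n\<rceil>"
      using assms by (simp add: one_le_ceiling)
    then have "cell_index n t = nat \<lceil>t * real n\<rceil>"
      unfolding cell_index_def by linarith
    with \<open>1 \<le> \<lceil>t * real n\<rceil>\<close> have "real (cell_index n t) = of_int \<lceil>t * real n\<rceil>"
      by simp
    then show ?thesis
      by (simp add: of_nat_diff cell_index_def) linarith
  qed (simp add: cell_index_def)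
  then show "real (cell_index n t - 1) / real n \<le> t" "t \<le> real (cell_index n t) / real n"
    using assms(1) by (simp_all add: field_simps)
qed

lemma cell_index_cell_node:
  assumes "1 \<le> n" "1 \<le> p" "1 \<le> j" "\<nu> \<in> {1..p}"
  shows "cell_index n (cell_node n p j \<nu> q) = j"
proof -
  have "real j - 1 < cell_node n p j \<nu> q * real n" "cell_node n p j \<nu> q * real n < real j"
    using cell_node_bounds[OF assms, of q] assms by (auto simp: of_nat_diff field_simps)
  then have "\<lceil>cell_node n p j \<nu> q * real n\<rceil> = int j"
    by (simp add: ceiling_eq_iff)
  then show ?thesis
    using assms unfolding cell_index_def by simp
qed

lemma cell_sum_const: "cell_sum n p (\<lambda>_. c) j = real p * c"
  by (simp add: cell_sum_def gw_def)

lemma cell_sum_diff: "cell_sum n p (\<lambda>\<tau>. f \<tau> - g \<tau>) j = cell_sum n p f j - cell_sum n p g j"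
  by (simp add: cell_sum_def right_diff_distrib sum_subtractf)

lemma cell_sum_cmult: "cell_sum n p (\<lambda>\<tau>. c * f \<tau>) j = c * cell_sum n p f j"
  by (simp add: cell_sum_def sum_distrib_left mult_ac)

lemma abs_cell_sum_le:
  assumes "\<And>\<nu> q. \<nu> \<in> {1..p} \<Longrightarrow> q \<in> {1..2} \<Longrightarrow> \<bar>g (cell_node n p j \<nu> q)\<bar> \<le> E"
  shows "\<bar>cell_sum n p g j\<bar> \<le> real p * E"
proof -
  have "\<bar>cell_sum n p g j\<bar> \<le> (\<Sum>\<nu>=1..p. \<Sum>q=1..2. gw q * \<bar>g (cell_node n p j \<nu> q)\<bar>)"
    unfolding cell_sum_def
    by (rule order_trans[OF sum_abs sum_mono], rule order_trans[OF sum_abs]) (simp add: abs_mult gw_def)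
  also have "\<dots> \<le> (\<Sum>\<nu>=1..p. \<Sum>q=1..2. gw q * E)"
    using assms by (intro sum_mono mult_left_mono) (auto simp: gw_def)
  also have "\<dots> = real p * E"
    by (simp add: gw_def)
  finally show ?thesis .
qed

lemma Qn_eq_cell_sum: "Qn n p g t = cell_sum n p g (cell_index n t) / real p"
  unfolding Qn_def cell_sum_def cell_node_def cell_index_def Let_def by (simp only: divide_inverse mult.commute)

lemma sum_split_cells:
  fixes n p :: nat
  shows "(\<Sum>i=1..n * p. F i) = (\<Sum>j=1..n. \<Sum>\<nu>=1..p. F ((j - 1) * p + \<nu>))"
proof (induction n)
  case (Suc n)
  have "(\<Sum>i=1..Suc n * p. F i) = (\<Sum>i=1..n * p + p. F i)"
    by (simp add: add.commute)
  also have "\<dots> = (\<Sum>i=1..n * p. F i) + (\<Sum>i=n * p + 1..n * p + p. F i)"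
    by (rule sum.ub_add_nat) simp
  also have "(\<Sum>i=n * p + 1..n * p + p. F i) = (\<Sum>\<nu>=1..p. F (n * p + \<nu>))"
    using sum.shift_bounds_cl_nat_ivl[of F 1 "n * p" p] by (simp add: add.commute)
  finally show ?case
    using Suc by simp
qed simp

lemma Kmd_eq_cell_sums:
  "Kmd l \<phi> (n * p) w s = (\<Sum>j=1..n. cell_sum n p (\<lambda>\<tau>. l s \<tau> (\<phi> \<tau>) * w \<tau>) j) / (real n * real p)"
  unfolding Kmd_def cell_sum_def cell_node_def by (subst sum_split_cells) (simp add: mult_ac)

lemma cell_sum_IQn:
  assumes "1 \<le> n" "1 \<le> p" "1 \<le> j"
  shows "cell_sum n p (IQn n p g) j = 0"
proof -
  have "Qn n p g (cell_node n p j \<nu> q) = cell_sum n p g j / real p" if "\<nu> \<in> {1..p}" for \<nu> q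
    using cell_index_cell_node[OF assms that] by (simp add: Qn_eq_cell_sum)
  then have "cell_sum n p (Qn n p g) j = cell_sum n p (\<lambda>_. cell_sum n p g j / real p) j"
    unfolding cell_sum_def by (intro sum.cong) auto
  then show ?thesis
    using assms(2) unfolding IQn_def cell_sum_diff by (simp add: cell_sum_const)
qed

definition oscillation_le :: "real \<Rightarrow> (real \<Rightarrow> real) \<Rightarrow> real \<Rightarrow> bool" where
  "oscillation_le \<delta> g E \<longleftrightarrow> (\<forall>x\<in>{0..1}. \<forall>y\<in>{0..1}. \<bar>x - y\<bar> \<le> \<delta> \<longrightarrow> \<bar>g x - g y\<bar> \<le> E)"

lemma lipschitz_on_oscillation_le:
  assumes "L-lipschitz_on {0..1} g"
  shows "oscillation_le \<delta> g (L * \<delta>)"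
  unfolding oscillation_le_def
proof (intro ballI impI)
  fix x y :: real assume xy: "x \<in> {0..1}" "y \<in> {0..1}" "\<bar>x - y\<bar> \<le> \<delta>"
  have "\<bar>g x - g y\<bar> \<le> L * \<bar>x - y\<bar>"
    using lipschitz_onD[OF assms xy(1,2)] by (simp add: dist_real_def)
  also have "\<dots> \<le> L * \<delta>"
    using xy(3) lipschitz_on_nonneg[OF assms] by (rule mult_left_mono)
  finally show "\<bar>g x - g y\<bar> \<le> L * \<delta>" .
qed

lemma abs_IQn_le:
  assumes "1 \<le> n" "1 \<le> p" "t \<in> {0..1}" "oscillation_le (1 / real n) g E"
  shows "\<bar>IQn n p g t\<bar> \<le> E"
proof -
  define j where "j = cell_index n t"
  have j: "j \<in> {1..n}" "real (j - 1) / real n \<le> t" "t \<le> real j / real n"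
    using cell_index_bounds[OF assms(1,3)] unfolding j_def by auto
  have "\<bar>IQn n p g t\<bar> = \<bar>cell_sum n p (\<lambda>\<tau>. g t - g \<tau>) j\<bar> / real p"
    using assms(2) unfolding IQn_def Qn_eq_cell_sum j_def[symmetric] cell_sum_diff cell_sum_const
    by (simp add: field_simps)
  also have "\<dots> \<le> real p * E / real p"
  proof (intro divide_right_mono abs_cell_sum_le)
    fix \<nu> q assume \<nu>: "\<nu> \<in> {1..p}"
    have "\<bar>t - cell_node n p j \<nu> q\<bar> \<le> 1 / real n"
      using cell_node_bounds[OF assms(1,2) _ \<nu>, of j q] j
      by (simp add: of_nat_diff diff_divide_distrib abs_le_iff)
    then show "\<bar>g t - g (cell_node n p j \<nu> q)\<bar> \<le> E"
      using assms(3,4) cell_node_in_unit[OF assms(1,2) j(1) \<nu>] unfolding oscillation_le_def by blast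
  qed simp
  also have "\<dots> = E"
    using assms(2) by simp
  finally show ?thesis .
qed

section \<open>Cancellation on cells\<close>

lemma abs_cell_sum_mult_le:
  assumes "cell_sum n p w j = 0"
    and W: "\<And>\<nu> q. \<nu> \<in> {1..p} \<Longrightarrow> q \<in> {1..2} \<Longrightarrow> \<bar>w (cell_node n p j \<nu> q)\<bar> \<le> W"
    and M: "\<And>\<nu> q. \<nu> \<in> {1..p} \<Longrightarrow> q \<in> {1..2} \<Longrightarrow> \<bar>a (cell_node n p j \<nu> q) - c\<bar> \<le> M"
  shows "\<bar>cell_sum n p (\<lambda>\<tau>. a \<tau> * w \<tau>) j\<bar> \<le> real p * (M * W)"
proof -
  have "cell_sum n p (\<lambda>\<tau>. a \<tau> * w \<tau>) j = cell_sum n p (\<lambda>\<tau>. (a \<tau> - c) * w \<tau>) j"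
    using cell_sum_diff[of n p "\<lambda>\<tau>. a \<tau> * w \<tau>" "\<lambda>\<tau>. c * w \<tau>" j] assms(1)
    by (simp add: cell_sum_cmult left_diff_distrib)
  also have "\<bar>\<dots>\<bar> \<le> real p * (M * W)"
  proof (rule abs_cell_sum_le)
    fix \<nu> q assume "\<nu> \<in> {1..p}" "q \<in> {1..2::nat}"
    with W M show "\<bar>(a (cell_node n p j \<nu> q) - c) * w (cell_node n p j \<nu> q)\<bar> \<le> M * W"
      unfolding abs_mult by (meson abs_ge_zero mult_mono order_trans)
  qed
  finally show ?thesis .
qed

lemma abs_sum_cell_sums_mult_le:
  assumes "\<And>j. j \<in> {1..n} \<Longrightarrow> cell_sum n p w j = 0"
    and "\<And>j \<nu> q. j \<in> {1..n} \<Longrightarrow> \<nu> \<in> {1..p} \<Longrightarrow> q \<in> {1..2} \<Longrightarrow> \<bar>w (cell_node n p j \<nu> q)\<bar> \<le> W"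
    and "\<And>j \<nu> q. j \<in> {1..n} \<Longrightarrow> \<nu> \<in> {1..p} \<Longrightarrow> q \<in> {1..2} \<Longrightarrow>
      \<bar>a (cell_node n p j \<nu> q) - a (cell_node n p j 1 1)\<bar> \<le> M j"
  shows "\<bar>\<Sum>j=1..n. cell_sum n p (\<lambda>\<tau>. a \<tau> * w \<tau>) j\<bar> \<le> real p * (\<Sum>j=1..n. M j) * W"
proof -
  have "\<bar>\<Sum>j=1..n. cell_sum n p (\<lambda>\<tau>. a \<tau> * w \<tau>) j\<bar> \<le> (\<Sum>j=1..n. real p * (M j * W))"
  proof (rule order_trans[OF sum_abs sum_mono])
    fix j assume "j \<in> {1..n}"
    with assms show "\<bar>cell_sum n p (\<lambda>\<tau>. a \<tau> * w \<tau>) j\<bar> \<le> real p * (M j * W)"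
      by (intro abs_cell_sum_mult_le[where c = "a (cell_node n p j 1 1)"]) auto
  qed
  also have "\<dots> = real p * (\<Sum>j=1..n. M j) * W"
    by (simp add: sum_distrib_left sum_distrib_right mult_ac)
  finally show ?thesis .
qed

lemma abs_Kmd_IQn_le:
  assumes "1 \<le> n" "1 \<le> p" "s \<in> {0..1}"
    and lip: "L-lipschitz_on {0..1} (\<lambda>t. l s t (\<phi> t))"
    and osc: "oscillation_le (1 / real n) g E"
  shows "\<bar>Kmd l \<phi> (n * p) (IQn n p g) s\<bar> \<le> L * E / real n"
proof -
  have "\<bar>\<Sum>j=1..n. cell_sum n p (\<lambda>\<tau>. l s \<tau> (\<phi> \<tau>) * IQn n p g \<tau>) j\<bar>
      \<le> real p * (\<Sum>j=1..n. L / real n) * E"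
  proof (rule abs_sum_cell_sums_mult_le)
    fix j assume "j \<in> {1..n}"
    then show "cell_sum n p (IQn n p g) j = 0"
      using cell_sum_IQn[OF assms(1,2)] by simp
  next
    fix j \<nu> q assume j: "j \<in> {1..n}" and \<nu>: "\<nu> \<in> {1..p}"
    show "\<bar>IQn n p g (cell_node n p j \<nu> q)\<bar> \<le> E"
      using abs_IQn_le[OF assms(1,2) cell_node_in_unit[OF assms(1,2) j \<nu>] osc] .
  next
    fix j \<nu> q assume j: "j \<in> {1..n}" and \<nu>: "\<nu> \<in> {1..p}"
    have "\<bar>l s (cell_node n p j \<nu> q) (\<phi> (cell_node n p j \<nu> q))
        - l s (cell_node n p j 1 1) (\<phi> (cell_node n p j 1 1))\<bar>
        \<le> L * \<bar>cell_node n p j \<nu> q - cell_node n p j 1 1\<bar>"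
      using lipschitz_onD[OF lip cell_node_in_unit[OF assms(1,2) j \<nu>]
          cell_node_in_unit[OF assms(1,2) j, of 1]] assms(2)
      by (simp add: dist_real_def)
    also have "\<dots> \<le> L * (1 / real n)"
      using cell_node_dist[OF assms(1,2) _ \<nu>, of j 1] j assms(2) lipschitz_on_nonneg[OF lip]
      by (intro mult_left_mono) auto
    finally show "\<bar>l s (cell_node n p j \<nu> q) (\<phi> (cell_node n p j \<nu> q))
        - l s (cell_node n p j 1 1) (\<phi> (cell_node n p j 1 1))\<bar> \<le> L / real n"
      by simp
  qed
  then show ?thesis
    using assms(1,2) unfolding Kmd_eq_cell_sums by (simp add: abs_divide field_simps)
qed

lemma card_crossing_cells_le_2:
  assumes "1 \<le> n" "0 \<le> a" "a \<le> b" "b - a \<le> 1 / real n"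
  shows "card {j \<in> {1..n}. a < real j / real n \<and> real (j - 1) / real n < b} \<le> 2"
proof -
  define f where "f = nat \<lfloor>real n * a\<rfloor>"
  have "real f \<le> real n * a" "real n * a < real f + 1"
    unfolding f_def using assms by simp_all
  moreover have "real n * b \<le> real n * a + 1"
    using assms by (simp add: field_simps)
  ultimately have "{j \<in> {1..n}. a < real j / real n \<and> real (j - 1) / real n < b} \<subseteq> {f + 1, f + 2}"
    using assms(1) by (auto simp: field_simps of_nat_diff)
  then have "card {j \<in> {1..n}. a < real j / real n \<and> real (j - 1) / real n < b} \<le> card {f + 1, f + 2}"
    by (intro card_mono) auto
  also have "\<dots> \<le> 2"
    by (simp add: card_insert_if)
  finally show ?thesis .
qed

lemma cell_mixed_difference_le:
  assumes lip: "\<And>s. s \<in> {0..1} \<Longrightarrow> L-lipschitz_on {0..1} (F s)"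
    and mixed: "off_diagonal_mixed_difference_le F C" "0 \<le> C"
    and xy: "x \<in> {0..1}" "y \<in> {0..1}" "\<bar>x - y\<bar> \<le> 1 / real n"
    and zc: "z \<in> {0..1}" "c \<in> {0..1}"
    and cell: "1 \<le> j" "real (j - 1) / real n < z" "z < real j / real n"
      "real (j - 1) / real n < c" "c < real j / real n"
  shows "\<bar>F x z - F y z - (F x c - F y c)\<bar>
    \<le> (if min x y < real j / real n \<and> real (j - 1) / real n < max x y then 2 * L / real n
        else C / real n ^ 2)"
proof -
  have "\<bar>z - c\<bar> \<le> 1 / real n"
    using cell by (simp add: of_nat_diff diff_divide_distrib abs_le_iff)
  show ?thesis
  \<comment> \<open>A cell not meeting the segment between \<open>x\<close> and \<open>y\<close> lies on one side of the diagonal for both.\<close>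
  proof (cases "min x y < real j / real n \<and> real (j - 1) / real n < max x y")
    case True
    have "\<bar>F s z - F s c\<bar> \<le> L / real n" if "s \<in> {0..1}" for s
    proof -
      have "\<bar>F s z - F s c\<bar> \<le> L * \<bar>z - c\<bar>"
        using lipschitz_onD[OF lip[OF that] zc] by (simp add: dist_real_def)
      also have "\<dots> \<le> L * (1 / real n)"
        using \<open>\<bar>z - c\<bar> \<le> 1 / real n\<close> lipschitz_on_nonneg[OF lip[OF that]] by (rule mult_left_mono)
      finally show ?thesis by simp
    qed
    from this[OF xy(1)] this[OF xy(2)] True show ?thesis
      by (simp add: abs_le_iff)
  next
    case False
    then have "max z c \<le> min x y \<or> max x y \<le> min z c"
      using cell by auto
    then have "\<bar>F x z - F y z - (F x c - F y c)\<bar> \<le> C * \<bar>x - y\<bar> * \<bar>z - c\<bar>"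
      using mixed xy zc unfolding off_diagonal_mixed_difference_le_def by blast
    also have "\<dots> \<le> C * (1 / real n) * (1 / real n)"
      using mixed(2) xy(3) \<open>\<bar>z - c\<bar> \<le> 1 / real n\<close> by (intro mult_mono mult_left_mono) auto
    finally show ?thesis
      using False by (simp only: if_not_P) (simp add: power2_eq_square)
  qed
qed

lemma sum_cell_bounds_le:
  assumes "1 \<le> n" "0 \<le> C" "0 \<le> L" "x \<in> {0..1}" "y \<in> {0..1}" "\<bar>x - y\<bar> \<le> 1 / real n"
  shows "(\<Sum>j=1..n. if min x y < real j / real n \<and> real (j - 1) / real n < max x y then 2 * L / real n
      else C / real n ^ 2) \<le> (C + 4 * L) / real n"
proof -
  define crossing where "crossing j \<longleftrightarrow> min x y < real j / real n \<and> real (j - 1) / real n < max x y"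
    for j
  have "card {j \<in> {1..n}. crossing j} \<le> 2"
    unfolding crossing_def
    by (rule card_crossing_cells_le_2[OF assms(1)])
      (use assms(4-6) in \<open>auto simp: abs_if min_def max_def split: if_splits\<close>)
  have "(\<Sum>j=1..n. if crossing j then 2 * L / real n else C / real n ^ 2)
      \<le> (\<Sum>j=1..n. C / real n ^ 2 + (if crossing j then 2 * L / real n else 0))"
    using assms(2) by (intro sum_mono) auto
  also have "\<dots> = C / real n + real (card {j \<in> {1..n}. crossing j}) * (2 * L / real n)"
    using assms(1) by (simp add: sum.distrib sum.If_cases power2_eq_square Int_def)
  also have "\<dots> \<le> C / real n + 2 * (2 * L / real n)"
    using \<open>card {j \<in> {1..n}. crossing j} \<le> 2\<close> assms(3)
    by (intro add_left_mono mult_right_mono) auto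
  finally show ?thesis
    unfolding crossing_def by (simp add: add_divide_distrib)
qed

lemma Kmd_diff_eq_cell_sums:
  "Kmd l \<phi> (n * p) w x - Kmd l \<phi> (n * p) w y =
    (\<Sum>j=1..n. cell_sum n p (\<lambda>\<tau>. (l x \<tau> (\<phi> \<tau>) - l y \<tau> (\<phi> \<tau>)) * w \<tau>) j) / (real n * real p)"
  unfolding Kmd_eq_cell_sums left_diff_distrib cell_sum_diff sum_subtractf diff_divide_distrib ..

lemma Kmd_IQn_oscillation_le:
  assumes "1 \<le> n" "1 \<le> p" "Lv-lipschitz_on {0..1} v"
    and lip: "\<And>s. s \<in> {0..1} \<Longrightarrow> L-lipschitz_on {0..1} (\<lambda>t. l s t (\<phi> t))"
    and mixed: "off_diagonal_mixed_difference_le (\<lambda>s t. l s t (\<phi> t)) C" "0 \<le> C"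
  shows "oscillation_le (1 / real n) (Kmd l \<phi> (n * p) (IQn n p v)) ((C + 4 * L) * Lv / real n ^ 3)"
  unfolding oscillation_le_def
proof (intro ballI impI)
  fix x y :: real assume xy: "x \<in> {0..1}" "y \<in> {0..1}" "\<bar>x - y\<bar> \<le> 1 / real n"
  define M where "M j = (if min x y < real j / real n \<and> real (j - 1) / real n < max x y
    then 2 * L / real n else C / real n ^ 2)" for j
  have "0 \<le> L"
    using lip[of 0] by (auto dest: lipschitz_on_nonneg)
  have "\<bar>\<Sum>j=1..n. cell_sum n p (\<lambda>\<tau>. (l x \<tau> (\<phi> \<tau>) - l y \<tau> (\<phi> \<tau>)) * IQn n p v \<tau>) j\<bar>
      \<le> real p * (\<Sum>j=1..n. M j) * (Lv / real n)"
  proof (rule abs_sum_cell_sums_mult_le)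
    fix j assume "j \<in> {1..n}"
    then show "cell_sum n p (IQn n p v) j = 0"
      using cell_sum_IQn[OF assms(1,2)] by simp
  next
    fix j \<nu> q assume j: "j \<in> {1..n}" and \<nu>: "\<nu> \<in> {1..p}"
    show "\<bar>IQn n p v (cell_node n p j \<nu> q)\<bar> \<le> Lv / real n"
      using abs_IQn_le[OF assms(1,2) cell_node_in_unit[OF assms(1,2) j \<nu>]
          lipschitz_on_oscillation_le[OF assms(3)]] by simp
  next
    fix j \<nu> q assume j: "j \<in> {1..n}" and \<nu>: "\<nu> \<in> {1..p}"
    show "\<bar>l x (cell_node n p j \<nu> q) (\<phi> (cell_node n p j \<nu> q)) - l y (cell_node n p j \<nu> q) (\<phi> (cell_node n p j \<nu> q))
        - (l x (cell_node n p j 1 1) (\<phi> (cell_node n p j 1 1)) - l y (cell_node n p j 1 1) (\<phi> (cell_node n p j 1 1)))\<bar>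
        \<le> M j"
      unfolding M_def
      using cell_mixed_difference_le[OF lip mixed xy cell_node_in_unit[OF assms(1,2) j \<nu>]
          cell_node_in_unit[OF assms(1,2) j, of 1]] cell_node_bounds[OF assms(1,2) _ \<nu>, of j q]
          cell_node_bounds[OF assms(1,2), of j 1] j assms(2)
      by simp
  qed
  moreover have "(\<Sum>j=1..n. M j) \<le> (C + 4 * L) / real n"
    unfolding M_def using sum_cell_bounds_le[OF assms(1) mixed(2) \<open>0 \<le> L\<close> xy] .
  moreover have "0 \<le> Lv"
    using assms(3) by (rule lipschitz_on_nonneg)
  ultimately have "\<bar>\<Sum>j=1..n. cell_sum n p (\<lambda>\<tau>. (l x \<tau> (\<phi> \<tau>) - l y \<tau> (\<phi> \<tau>)) * IQn n p v \<tau>) j\<bar>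
      \<le> real p * ((C + 4 * L) / real n) * (Lv / real n)"
    by (elim order_trans) (intro mult_right_mono mult_left_mono; simp)
  then show "\<bar>Kmd l \<phi> (n * p) (IQn n p v) x - Kmd l \<phi> (n * p) (IQn n p v) y\<bar>
      \<le> (C + 4 * L) * Lv / real n ^ 3"
    using assms(1,2) unfolding Kmd_diff_eq_cell_sums by (simp add: abs_divide field_simps power3_eq_cube)
qed

theorem proposition4p1:
  fixes \<kappa> l :: "real \<Rightarrow> real \<Rightarrow> real \<Rightarrow> real"
    and f \<phi> v :: "real \<Rightarrow> real"
  assumes kernel: "class_G2_2_0 \<kappa> l"
    and f_C2: "C2_01 f"
    and phi_C2: "C2_01 \<phi>"
    and phi_sol: "\<forall>s\<in>{0..1}. \<phi> s - integral {0..1} (\<lambda>t. \<kappa> s t (\<phi> t)) = f s"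
    and phi_unique: "\<forall>x. continuous_on {0..1} x \<and>
        (\<forall>s\<in>{0..1}. x s - integral {0..1} (\<lambda>t. \<kappa> s t (x t)) = f s) \<longrightarrow>
        (\<forall>s\<in>{0..1}. x s = \<phi> s)"
    and v_C1: "C1_01 v"
  shows "(\<exists>C N. \<forall>n\<ge>N. \<forall>p\<ge>1. \<forall>s\<in>{0..1}.
            \<bar>IQn n p (Kmd l \<phi> (n * p) (IQn n p v)) s\<bar> \<le> C * (1 / real n) ^ 3)
       \<and> (\<exists>C N. \<forall>n\<ge>N. \<forall>p\<ge>1. \<forall>s\<in>{0..1}.
            \<bar>Kmd l \<phi> (n * p) (IQn n p (Kmd l \<phi> (n * p) (IQn n p v))) s\<bar> \<le> C * (1 / real n) ^ 4)"
proof -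
  obtain Lp where \<phi>: "Lp-lipschitz_on {0..1} \<phi>"
    using C1_01_lipschitz_on[OF C2_01_imp_C1_01[OF phi_C2]] .
  obtain Lv where v: "Lv-lipschitz_on {0..1} v"
    using C1_01_lipschitz_on[OF v_C1] .
  obtain L where lip: "\<And>s. s \<in> {0..1} \<Longrightarrow> L-lipschitz_on {0..1} (\<lambda>t. l s t (\<phi> t))"
    by (rule class_G2_2_0_lipschitz_along_graph[OF kernel \<phi>]) (rule that)
  obtain C where mixed: "off_diagonal_mixed_difference_le (\<lambda>s t. l s t (\<phi> t)) C" "0 \<le> C"
    by (rule class_G2_2_0_mixed_difference_along_graph[OF kernel \<phi>]) (rule that)
  define E where "E = (C + 4 * L) * Lv"
  have osc: "oscillation_le (1 / real n) (Kmd l \<phi> (n * p) (IQn n p v)) (E * (1 / real n) ^ 3)"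
    if "1 \<le> n" "1 \<le> p" for n p
    using Kmd_IQn_oscillation_le[where l = l and \<phi> = \<phi>, OF that v lip mixed]
    by (simp add: E_def power_divide)
  have "\<bar>IQn n p (Kmd l \<phi> (n * p) (IQn n p v)) s\<bar> \<le> E * (1 / real n) ^ 3"
    if "1 \<le> n" "1 \<le> p" "s \<in> {0..1}" for n p s
    using abs_IQn_le[OF that osc[OF that(1,2)]] .
  moreover have
    "\<bar>Kmd l \<phi> (n * p) (IQn n p (Kmd l \<phi> (n * p) (IQn n p v))) s\<bar> \<le> (L * E) * (1 / real n) ^ 4"
    if "1 \<le> n" "1 \<le> p" "s \<in> {0..1}" for n p s
    using abs_Kmd_IQn_le[where l = l and \<phi> = \<phi>, OF that lip[OF that(3)] osc[OF that(1,2)]]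
    by (simp add: power_divide eval_nat_numeral)
  ultimately show ?thesis
    by blast
qed

end
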